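(* Let $K$ be a field of characteristic $0$, $n\ge2$, and $f\in K[[x_1,\dots,x_n]]$. Let $T=x_1D_{x_1}-x_2D_{x_2}$ act on $K[[x_1,\dots,x_n]]$ with $D_{x_i}=\partial/\partial x_i$. Then there exists $s\in\mathbb N$ with $T^s(f)=0$ if and only if there exists a power series $g\in K[[y_1,\dots,y_{n-1}]]$ in $n-1$ variables such that $f(x_1,\dots,x_n)=g(x_1x_2,x_3,\dots,x_n)$. *)

theory Defs
  imports Main
begin

text \<open>Formal power series in n variables x_1..x_n over a ring 'a, represented by
their coefficient functions on exponent vectors alpha :: nat => nat (variable x_(i+1)
has index i).\<close>

type_synonym 'a mps = "(nat \<Rightarrow> nat) \<Rightarrow> 'a"

definition mps :: "nat \<Rightarrow> ('a::zero) mps set" where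
  "mps n = {f. \<forall>\<alpha>. (\<exists>i\<ge>n. \<alpha> i \<noteq> 0) \<longrightarrow> f \<alpha> = 0}"

definition mps_deriv :: "nat \<Rightarrow> ('a::semiring_1) mps \<Rightarrow> 'a mps" where
  "mps_deriv i f = (\<lambda>\<alpha>. of_nat (\<alpha> i + 1) * f (\<alpha>(i := \<alpha> i + 1)))"

definition mps_mulx :: "nat \<Rightarrow> ('a::zero) mps \<Rightarrow> 'a mps" where
  "mps_mulx i f = (\<lambda>\<alpha>. if \<alpha> i = 0 then 0 else f (\<alpha>(i := \<alpha> i - 1)))"

definition opT :: "('a::ring_1) mps \<Rightarrow> 'a mps" where
  "opT f = (\<lambda>\<alpha>. mps_mulx 0 (mps_deriv 0 f) \<alpha> - mps_mulx 1 (mps_deriv 1 f) \<alpha>)"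

text \<open>Monomial substitution: for g in variables y_1..y_(n-1), the series
g(x_1 x_2, x_3, ..., x_n).  The monomial y^beta maps to
(x_1 x_2)^(beta_1) x_3^(beta_2) ... x_n^(beta_(n-1)), so the coefficient at alpha is
g_beta if alpha_1 = alpha_2 = beta_1 and alpha_(j+1) = beta_j (j >= 2), and 0 otherwise.\<close>
definition subst_x1x2 :: "('a::zero) mps \<Rightarrow> 'a mps" where
  "subst_x1x2 g = (\<lambda>\<alpha>. if \<alpha> 0 = \<alpha> 1
      then g (\<lambda>j. if j = 0 then \<alpha> 0 else \<alpha> (j + 1)) else 0)"

end

theory Submission
  imports Defs
begin

text \<open>The operator T is diagonal on monomials: T x^a = (a_1 - a_2) x^a. In characteristic 0
  and without zero divisors, some power of T therefore kills f exactly when f is supported on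
  the exponents with a_1 = a_2, and these are precisely the exponents of the monomials
  (x_1 x_2)^k x_3^b ... x_n^c produced by the substitution y_1 := x_1 x_2.\<close>

lemma mps_mulx_mps_deriv:
  "mps_mulx i (mps_deriv i f) \<alpha> = of_nat (\<alpha> i) * (f \<alpha> :: 'a::semiring_1)"
proof (cases "\<alpha> i = 0")
  case True
  then show ?thesis by (simp add: mps_mulx_def)
next
  case False
  then obtain k where "\<alpha> i = Suc k" by (metis not0_implies_Suc)
  moreover have "(\<alpha>(i := k))(i := Suc k) = \<alpha>" using \<open>\<alpha> i = Suc k\<close> by auto
  ultimately show ?thesis by (simp add: mps_mulx_def mps_deriv_def)
qed

lemma opT_eq: "opT f = (\<lambda>\<alpha>. (of_nat (\<alpha> 0) - of_nat (\<alpha> 1)) * (f \<alpha> :: 'a::ring_1))"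
  by (simp add: opT_def mps_mulx_mps_deriv algebra_simps)

lemma funpow_opT:
  "(opT ^^ s) f = (\<lambda>\<alpha>. (of_nat (\<alpha> 0) - of_nat (\<alpha> 1)) ^ s * (f \<alpha> :: 'a::ring_1))"
  by (induction s) (simp_all add: opT_eq mult.assoc)

lemma funpow_opT_eq_zero_iff:
  fixes f :: "('a::{ring_1_no_zero_divisors, ring_char_0}) mps"
  shows "(\<exists>s. (opT ^^ s) f = (\<lambda>_. 0)) \<longleftrightarrow> (\<forall>\<alpha>. \<alpha> 0 \<noteq> \<alpha> 1 \<longrightarrow> f \<alpha> = 0)"
proof
  assume "\<exists>s. (opT ^^ s) f = (\<lambda>_. 0)"
  then obtain s where s: "(opT ^^ s) f = (\<lambda>_. 0)" ..
  have "f \<alpha> = 0" if "\<alpha> 0 \<noteq> \<alpha> 1" for \<alpha>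
    using fun_cong[OF s, of \<alpha>] that by (simp add: funpow_opT)
  then show "\<forall>\<alpha>. \<alpha> 0 \<noteq> \<alpha> 1 \<longrightarrow> f \<alpha> = 0" by blast
next
  assume diagonal: "\<forall>\<alpha>. \<alpha> 0 \<noteq> \<alpha> 1 \<longrightarrow> f \<alpha> = 0"
  have "opT f \<alpha> = 0" for \<alpha>
    using diagonal by (cases "\<alpha> 0 = \<alpha> 1") (simp_all add: opT_eq)
  then have "(opT ^^ 1) f = (\<lambda>_. 0)" by auto
  then show "\<exists>s. (opT ^^ s) f = (\<lambda>_. 0)" ..
qed

definition unsubst_x1x2 :: "('a::zero) mps \<Rightarrow> 'a mps" where
  "unsubst_x1x2 f = (\<lambda>\<beta>. f (\<lambda>j. if j \<le> 1 then \<beta> 0 else \<beta> (j - 1)))"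

lemma subst_x1x2_off_diagonal: "\<alpha> 0 \<noteq> \<alpha> 1 \<Longrightarrow> subst_x1x2 g \<alpha> = 0"
  by (simp add: subst_x1x2_def)

lemma subst_unsubst_x1x2:
  assumes "\<forall>\<alpha>. \<alpha> 0 \<noteq> \<alpha> 1 \<longrightarrow> f \<alpha> = 0"
  shows "subst_x1x2 (unsubst_x1x2 f) = f"
proof
  fix \<alpha> :: "nat \<Rightarrow> nat"
  show "subst_x1x2 (unsubst_x1x2 f) \<alpha> = f \<alpha>"
  proof (cases "\<alpha> 0 = \<alpha> 1")
    case True
    let ?\<beta> = "\<lambda>j. if j = 0 then \<alpha> 0 else \<alpha> (j + 1)"
    have "(\<lambda>j. if j \<le> 1 then ?\<beta> 0 else ?\<beta> (j - 1)) = \<alpha>"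
    proof
      fix j
      show "(if j \<le> 1 then ?\<beta> 0 else ?\<beta> (j - 1)) = \<alpha> j"
        using True by (cases j) auto
    qed
    moreover have "subst_x1x2 (unsubst_x1x2 f) \<alpha>
        = f (\<lambda>j. if j \<le> 1 then ?\<beta> 0 else ?\<beta> (j - 1))"
      by (simp add: subst_x1x2_def unsubst_x1x2_def True)
    ultimately show ?thesis by simp
  qed (simp add: subst_x1x2_def assms)
qed

text \<open>Valid for every n, since i + 1 \<ge> n iff i \<ge> n - 1 even with truncated subtraction.\<close>
lemma unsubst_x1x2_mps:
  assumes "f \<in> mps n"
  shows "unsubst_x1x2 f \<in> mps (n - 1)"
  unfolding mps_def
proof (intro CollectI allI impI)
  have vanish: "f \<alpha> = 0" if "n \<le> i" "\<alpha> i \<noteq> 0" for \<alpha> i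
    using assms that unfolding mps_def by blast
  fix \<beta> :: "nat \<Rightarrow> nat"
  assume "\<exists>i\<ge>n - 1. \<beta> i \<noteq> 0"
  then obtain i where "n - 1 \<le> i" "\<beta> i \<noteq> 0" by blast
  then show "unsubst_x1x2 f \<beta> = 0"
    unfolding unsubst_x1x2_def by (intro vanish[of "i + 1"]) auto
qed

lemma ex_subst_x1x2_iff:
  assumes "f \<in> mps n"
  shows "(\<exists>g \<in> mps (n - 1). f = subst_x1x2 g) \<longleftrightarrow> (\<forall>\<alpha>. \<alpha> 0 \<noteq> \<alpha> 1 \<longrightarrow> f \<alpha> = 0)"
proof
  assume "\<exists>g \<in> mps (n - 1). f = subst_x1x2 g"
  then show "\<forall>\<alpha>. \<alpha> 0 \<noteq> \<alpha> 1 \<longrightarrow> f \<alpha> = 0" by (auto simp: subst_x1x2_off_diagonal)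
next
  assume "\<forall>\<alpha>. \<alpha> 0 \<noteq> \<alpha> 1 \<longrightarrow> f \<alpha> = 0"
  then have "f = subst_x1x2 (unsubst_x1x2 f)" by (simp add: subst_unsubst_x1x2)
  with unsubst_x1x2_mps[OF assms] show "\<exists>g \<in> mps (n - 1). f = subst_x1x2 g" by blast
qed

theorem lemma3p7:
  fixes f :: "('a::field_char_0) mps" and n :: nat
  assumes "n \<ge> 2" and "f \<in> mps n"
  shows "(\<exists>s::nat. (opT ^^ s) f = (\<lambda>_. 0)) \<longleftrightarrow>
         (\<exists>g \<in> mps (n - 1). f = subst_x1x2 g)"
  using funpow_opT_eq_zero_iff ex_subst_x1x2_iff[OF assms(2)] by blast

end
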